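(* Let $X$ be a separable metrizable space. Then: (1) $USC_p(X)$ is sequentially separable; (2) $B_1(X)$ is sequentially separable; (3) there exists a countable subset $S$ of $C(X)$ such that $[S]_{seq} = B_1(X)$.
   Context: $USC_p(X)$ is the set of all real-valued upper semicontinuous functions on $X$ (functions $f$ with $f^{-1}((-\infty,r))$ open for all $r\in\mathbb{R}$) with the topology of pointwise convergence. For a topological space $Z$ and $A\subseteq Z$, $[A]_{seq}$ denotes the set of all limits of sequences from $A$; $Z$ is sequentially separable if it has a countable $D$ with $[D]_{seq}=Z$. $C(X)$ is the set of continuous real-valued functions on $X$; $B_1(X)$ is the set of pointwise limits of sequences of continuous real-valued functions on $X$, with the pointwise convergence topology (sequential closure in (3) taken in $\mathbb{R}^X$ with the pointwise topology). *)

theory Defs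
  imports "HOL-Analysis.Analysis"
begin

definition pointwise_top :: "'a topology \<Rightarrow> ('a \<Rightarrow> real) topology" where
  "pointwise_top X = product_topology (\<lambda>_. euclideanreal) (topspace X)"

definition seq_closure :: "'b topology \<Rightarrow> 'b set \<Rightarrow> 'b set" where
  "seq_closure Z A = {z. \<exists>\<sigma>. range \<sigma> \<subseteq> A \<and> limitin Z \<sigma> z sequentially}"

definition sequentially_separable :: "'b topology \<Rightarrow> bool" where
  "sequentially_separable Z \<longleftrightarrow>
     (\<exists>D. countable D \<and> D \<subseteq> topspace Z \<and> seq_closure Z D = topspace Z)"

definition USC :: "'a topology \<Rightarrow> ('a \<Rightarrow> real) set" where
  "USC X = {f \<in> topspace X \<rightarrow>\<^sub>E UNIV.
              \<forall>r. openin X {x \<in> topspace X. f x < r}}"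

definition USC_p :: "'a topology \<Rightarrow> ('a \<Rightarrow> real) topology" where
  "USC_p X = subtopology (pointwise_top X) (USC X)"

definition Cfun :: "'a topology \<Rightarrow> ('a \<Rightarrow> real) set" where
  "Cfun X = {f \<in> topspace X \<rightarrow>\<^sub>E UNIV. continuous_map X euclideanreal f}"

definition B1 :: "'a topology \<Rightarrow> ('a \<Rightarrow> real) set" where
  "B1 X = seq_closure (pointwise_top X) (Cfun X)"

definition B1_p :: "'a topology \<Rightarrow> ('a \<Rightarrow> real) topology" where
  "B1_p X = subtopology (pointwise_top X) (B1 X)"

end

theory Submission
  imports Defs
begin

(* Upper semicontinuous and Baire class one functions f are F\<^sub>\<sigma>-measurable: every set {f < r}
   and {r < f} is F\<^sub>\<sigma>. A dense sequence p embeds X into the Hilbert cube via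
   x \<mapsto> (min 1 (d x p\<^sub>n))\<^sub>n, and the l1 distance of the first N coordinates is a totally
   bounded pseudometric that, for large N, separates a point from a closed set. Exhausting the
   level sets by closed sets that are monotone in the level, f is the pointwise limit of minima
   of finitely many cones r + L * pdist N x (p k) with rational r and apexes from a finite
   net. These minima form a countable set S of continuous functions that does not depend on f,
   so its sequential closure contains USC(X) and B\<^sub>1(X), while S \<subseteq> C(X) \<subseteq> USC(X) \<inter> B\<^sub>1(X). *)

section \<open>Sequential closures and F-sigma measurable functions\<close>

lemma seq_closure_mono: "A \<subseteq> B \<Longrightarrow> seq_closure Z A \<subseteq> seq_closure Z B"
  unfolding seq_closure_def by blast

lemma seq_closure_subset_topspace: "seq_closure Z A \<subseteq> topspace Z"
  unfolding seq_closure_def using limitin_topspace by fastforce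

lemma seq_closure_subtopology:
  assumes "S \<subseteq> T" "T \<subseteq> seq_closure Z S"
  shows "seq_closure (subtopology Z T) S = T"
proof
  show "seq_closure (subtopology Z T) S \<subseteq> T"
    unfolding seq_closure_def limitin_subtopology by blast
  show "T \<subseteq> seq_closure (subtopology Z T) S"
  proof
    fix z assume "z \<in> T"
    then obtain \<sigma> where "range \<sigma> \<subseteq> S" "limitin Z \<sigma> z sequentially"
      using assms(2) unfolding seq_closure_def by blast
    then show "z \<in> seq_closure (subtopology Z T) S"
      using \<open>z \<in> T\<close> assms(1) unfolding seq_closure_def limitin_subtopology
      by (intro CollectI exI[of _ \<sigma>]) (auto intro: always_eventually)
  qed
qed

lemma sequentially_separable_subtopology:
  assumes "countable S" "S \<subseteq> T" "T \<subseteq> seq_closure Z S"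
  shows "sequentially_separable (subtopology Z T)"
proof -
  have "topspace (subtopology Z T) = T"
    using assms(3) seq_closure_subset_topspace by fastforce
  then show ?thesis
    unfolding sequentially_separable_def using assms seq_closure_subtopology[OF assms(2,3)]
    by (intro exI[of _ S]) auto
qed

lemma limitin_pointwise_top:
  assumes "\<And>n. \<sigma> n \<in> extensional (topspace X)"
  shows "limitin (pointwise_top X) \<sigma> f sequentially \<longleftrightarrow>
     f \<in> extensional (topspace X) \<and> (\<forall>x\<in>topspace X. (\<lambda>n. \<sigma> n x) \<longlonglongrightarrow> f x)"
  unfolding pointwise_top_def limitin_componentwise using assms by (simp add: PiE_iff)

definition fsigma_measurable :: "'a topology \<Rightarrow> ('a \<Rightarrow> real) \<Rightarrow> bool" where
  "fsigma_measurable X f \<longleftrightarrow>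
     (\<forall>q. fsigma_in X {x \<in> topspace X. q < f x} \<and> fsigma_in X {x \<in> topspace X. f x < q})"

lemma less_iff_ex_inverse_Suc: "(q::real) < y \<longleftrightarrow> (\<exists>n. q + 1 / Suc n \<le> y)"
proof
  assume "q < y"
  then obtain n where "inverse (real (Suc n)) < y - q"
    using reals_Archimedean[of "y - q"] by auto
  then have "q + 1 / Suc n \<le> y"
    unfolding inverse_eq_divide by linarith
  then show "\<exists>n. q + 1 / Suc n \<le> y" ..
next
  assume "\<exists>n. q + 1 / Suc n \<le> y"
  then obtain n where "q + 1 / Suc n \<le> y" ..
  moreover have "0 < 1 / real (Suc n)" by simp
  ultimately show "q < y" by linarith
qed

lemma less_limit_iff_eventually_ge:
  fixes u :: "nat \<Rightarrow> real"
  assumes "u \<longlonglongrightarrow> l"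
  shows "q < l \<longleftrightarrow> (\<exists>a b. \<forall>n\<ge>b. q + 1 / Suc a \<le> u n)"
proof
  assume "q < l"
  then obtain a where "inverse (Suc a) < l - q"
    using reals_Archimedean[of "l - q"] by auto
  then have "q + 1 / Suc a < l"
    unfolding inverse_eq_divide by linarith
  with assms have "\<forall>\<^sub>F n in sequentially. q + 1 / Suc a < u n"
    by (rule order_tendstoD(1))
  then show "\<exists>a b. \<forall>n\<ge>b. q + 1 / Suc a \<le> u n"
    unfolding eventually_sequentially by (auto intro: less_imp_le)
next
  assume "\<exists>a b. \<forall>n\<ge>b. q + 1 / Suc a \<le> u n"
  then obtain a b where "\<forall>n\<ge>b. q + 1 / Suc a \<le> u n"
    by blast
  then have "q + 1 / Suc a \<le> l"
    using LIMSEQ_le_const[OF assms] by auto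
  moreover have "0 < 1 / real (Suc a)"
    by simp
  ultimately show "q < l"
    by linarith
qed

lemma fsigma_in_superlevel_limit:
  assumes cont: "\<And>n. continuous_map X euclideanreal (g n)"
    and lim: "\<And>x. x \<in> topspace X \<Longrightarrow> (\<lambda>n. g n x) \<longlonglongrightarrow> h x"
  shows "fsigma_in X {x \<in> topspace X. q < h x}"
proof -
  define P where "P a b = {x \<in> topspace X. \<forall>n\<ge>b. q + 1 / Suc a \<le> g n x}" for a b :: nat
  have eq: "{x \<in> topspace X. q < h x} = (\<Union>a. \<Union>b. P a b)"
    unfolding P_def using less_limit_iff_eventually_ge[OF lim] by auto
  have "closedin X (P a b)" for a b
  proof -
    have "P a b = (\<Inter>n\<in>{b..}. {x \<in> topspace X. g n x \<in> {q + 1 / Suc a..}})"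
      unfolding P_def by auto
    moreover have "closedin X {x \<in> topspace X. g n x \<in> {q + 1 / Suc a..}}" for n
      by (rule closedin_continuous_map_preimage[OF cont]) simp
    ultimately show ?thesis
      by (auto intro!: closedin_Inter)
  qed
  then have "fsigma_in X (\<Union>b. P a b)" for a
    by (intro fsigma_in_Union) (auto intro: closed_imp_fsigma_in)
  then show ?thesis
    unfolding eq by (intro fsigma_in_Union) auto
qed

lemma fsigma_measurable_limit:
  assumes cont: "\<And>n. continuous_map X euclideanreal (g n)"
    and lim: "\<And>x. x \<in> topspace X \<Longrightarrow> (\<lambda>n. g n x) \<longlonglongrightarrow> h x"
  shows "fsigma_measurable X h"
  unfolding fsigma_measurable_def
proof (intro allI conjI)
  fix q
  show "fsigma_in X {x \<in> topspace X. q < h x}"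
    using cont lim by (rule fsigma_in_superlevel_limit)
  have "fsigma_in X {x \<in> topspace X. - q < - h x}"
    using cont lim by (intro fsigma_in_superlevel_limit[of X "\<lambda>n x. - g n x"])
      (auto intro: continuous_map_minus tendsto_minus)
  then show "fsigma_in X {x \<in> topspace X. h x < q}"
    by simp
qed

lemma B1_subset_fsigma_measurable:
  "B1 X \<subseteq> {f \<in> extensional (topspace X). fsigma_measurable X f}"
proof
  fix f assume "f \<in> B1 X"
  then obtain \<sigma> where \<sigma>: "range \<sigma> \<subseteq> Cfun X" "limitin (pointwise_top X) \<sigma> f sequentially"
    unfolding B1_def seq_closure_def by blast
  have ext: "\<And>n. \<sigma> n \<in> extensional (topspace X)"
    and cont: "\<And>n. continuous_map X euclideanreal (\<sigma> n)"
    using \<sigma>(1) unfolding Cfun_def by (auto simp: PiE_def)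
  have "f \<in> extensional (topspace X)" and lim: "\<And>x. x \<in> topspace X \<Longrightarrow> (\<lambda>n. \<sigma> n x) \<longlonglongrightarrow> f x"
    using \<sigma>(2) by (simp_all add: limitin_pointwise_top[OF ext])
  moreover have "fsigma_measurable X f"
    using cont lim by (rule fsigma_measurable_limit)
  ultimately show "f \<in> {f \<in> extensional (topspace X). fsigma_measurable X f}"
    by blast
qed

lemma USC_subset_fsigma_measurable:
  assumes "metrizable_space X"
  shows "USC X \<subseteq> {f \<in> extensional (topspace X). fsigma_measurable X f}"
proof
  fix f assume "f \<in> USC X"
  then have sub: "openin X {x \<in> topspace X. f x < q}" for q
    unfolding USC_def by blast
  have eq: "{x \<in> topspace X. q < f x} = (\<Union>n. topspace X - {x \<in> topspace X. f x < q + 1 / Suc n})" for q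
    by (auto simp: not_less less_iff_ex_inverse_Suc[of q] dest: leD)
  have "fsigma_in X {x \<in> topspace X. q < f x}" for q
    unfolding eq by (intro fsigma_in_Union closed_imp_fsigma_in) (auto intro!: closedin_diff sub)
  then show "f \<in> {f \<in> extensional (topspace X). fsigma_measurable X f}"
    using assms sub open_imp_fsigma_in \<open>f \<in> USC X\<close>
    unfolding fsigma_measurable_def USC_def by (auto simp: PiE_def)
qed

lemma Cfun_subset_B1: "Cfun X \<subseteq> B1 X"
proof
  fix f assume "f \<in> Cfun X"
  then have "range (\<lambda>n::nat. f) \<subseteq> Cfun X" "limitin (pointwise_top X) (\<lambda>n. f) f sequentially"
    unfolding Cfun_def pointwise_top_def by auto
  then show "f \<in> B1 X"
    unfolding B1_def seq_closure_def by blast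
qed

lemma Cfun_subset_USC: "Cfun X \<subseteq> USC X"
  unfolding Cfun_def USC_def
  using openin_continuous_map_preimage[of X euclideanreal _ "{..<_}"] by auto

section \<open>Closed exhaustions and grids\<close>

lemma continuous_map_Min_insert:
  assumes "finite W" "\<And>w. w \<in> W \<Longrightarrow> continuous_map X euclideanreal (g w)"
  shows "continuous_map X euclideanreal (\<lambda>x. Min (insert c ((\<lambda>w. g w x) ` W)))"
  using assms
proof (induction W rule: finite_induct)
  case (insert w W)
  have "Min (insert c ((\<lambda>w. g w x) ` insert w W)) = min (g w x) (Min (insert c ((\<lambda>w. g w x) ` W)))" for x
    by (metis Min.insert finite_imageI finite_insert image_insert insert_commute insert_not_empty insert.hyps(1))
  moreover have "continuous_map X euclideanreal (\<lambda>x. min (g w x) (Min (insert c ((\<lambda>w. g w x) ` W))))"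
    using insert by (intro continuous_map_real_min) auto
  ultimately show ?case
    by simp
qed simp

lemma fsigma_in_monotone_exhaustion:
  fixes v :: "nat \<Rightarrow> 'b::preorder"
  assumes fsigma: "\<And>j. fsigma_in X (U j)" and anti: "\<And>i j. v j \<le> v i \<Longrightarrow> U i \<subseteq> U j"
  obtains G :: "nat \<Rightarrow> nat \<Rightarrow> 'a set"
  where "\<And>j k. closedin X (G j k)" "\<And>j k. G j k \<subseteq> U j"
    "\<And>j x. x \<in> U j \<Longrightarrow> \<exists>k. x \<in> G j k"
    "\<And>j j' k k'. k \<le> k' \<Longrightarrow> v j' \<le> v j \<Longrightarrow> G j k \<subseteq> G j' k'"
proof -
  have "\<forall>j. \<exists>C::nat \<Rightarrow> 'a set. (\<forall>n. closedin X (C n)) \<and> (\<forall>n. C n \<subseteq> C (Suc n)) \<and> \<Union> (range C) = U j"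
    using fsigma unfolding fsigma_in_ascending by blast
  then obtain F :: "nat \<Rightarrow> nat \<Rightarrow> 'a set"
    where "\<forall>j. (\<forall>n. closedin X (F j n)) \<and> (\<forall>n. F j n \<subseteq> F j (Suc n)) \<and> \<Union> (range (F j)) = U j"
    by (metis choice)
  then have F: "\<And>j n. closedin X (F j n)" "\<And>j. \<Union> (range (F j)) = U j"
    by simp_all
  define G where "G j k = (\<Union>i\<in>{i. i \<le> k \<and> v j \<le> v i}. \<Union>l\<in>{..k}. F i l)" for j k
  show thesis
  proof
    show "closedin X (G j k)" for j k
      unfolding G_def by (auto intro!: closedin_Union simp: F(1))
    show "G j k \<subseteq> U j" for j k
      unfolding G_def using F(2) anti by fastforce
  next
    fix j x assume "x \<in> U j"
    then obtain l where "x \<in> F j l"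
      using F(2)[of j] by auto
    moreover have "j \<in> {i. i \<le> max j l \<and> v j \<le> v i}" "l \<in> {..max j l}"
      by auto
    ultimately have "x \<in> G j (max j l)"
      unfolding G_def by (intro UN_I)
    then show "\<exists>k. x \<in> G j k" ..
  next
    fix j j' k k' :: nat assume "k \<le> k'" "v j' \<le> v j"
    then show "G j k \<subseteq> G j' k'"
      unfolding G_def by (intro UN_mono) (auto intro: order_trans[OF \<open>v j' \<le> v j\<close>])
  qed
qed

lemma finite_grid_net:
  fixes g :: "nat \<Rightarrow> 'a \<Rightarrow> real" and G :: nat
  assumes range01: "\<And>n x. x \<in> M \<Longrightarrow> 0 \<le> g n x \<and> g n x \<le> 1" and "0 < G"
  obtains F where "finite F" "F \<subseteq> M" "\<And>x. x \<in> M \<Longrightarrow> \<exists>y\<in>F. \<forall>n<N. \<bar>g n x - g n y\<bar> < 1 / G"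
proof
  define cell where "cell x = (\<lambda>n\<in>{..<N}. \<lfloor>G * g n x\<rfloor>)" for x
  define F where "F = inv_into M cell ` cell ` M"
  have cell_range: "\<lfloor>G * g n x\<rfloor> \<in> {0..int G}" if "x \<in> M" for n x
  proof -
    have "G * g n x \<le> G"
      using range01[OF that] by (simp add: mult_left_le)
    then show ?thesis
      using range01[OF that] by (simp add: floor_le_iff)
  qed
  then have "cell ` M \<subseteq> {..<N} \<rightarrow>\<^sub>E {0..int G}"
    unfolding cell_def by (intro image_subsetI) (simp add: restrict_PiE_iff cell_range)
  then have "finite (cell ` M)"
    by (rule finite_subset) (simp add: finite_PiE)
  then show "finite F"
    unfolding F_def by simp
  show "F \<subseteq> M"
    unfolding F_def by (auto intro: inv_into_into)
  fix x assume "x \<in> M"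
  define y where "y = inv_into M cell (cell x)"
  have "\<bar>g n x - g n y\<bar> < 1 / G" if "n < N" for n
  proof -
    have "cell y n = cell x n"
      unfolding y_def using \<open>x \<in> M\<close> by (simp add: f_inv_into_f)
    then have "\<lfloor>G * g n x\<rfloor> = \<lfloor>G * g n y\<rfloor>"
      using that by (simp add: cell_def)
    then have "real_of_int \<lfloor>G * g n x\<rfloor> = real_of_int \<lfloor>G * g n y\<rfloor>"
      by simp
    then have "\<bar>G * g n x - G * g n y\<bar> < 1"
      using floor_correct[of "G * g n x"] floor_correct[of "G * g n y"] by linarith
    moreover have "\<bar>G * g n x - G * g n y\<bar> = \<bar>g n x - g n y\<bar> * G"
      by (simp add: abs_mult flip: right_diff_distrib)
    ultimately show ?thesis
      using \<open>0 < G\<close> by (simp add: pos_less_divide_eq)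
  qed
  moreover have "y \<in> F"
    unfolding F_def y_def using \<open>x \<in> M\<close> by (intro imageI)
  ultimately show "\<exists>y\<in>F. \<forall>n<N. \<bar>g n x - g n y\<bar> < 1 / G"
    by blast
qed

section \<open>A totally bounded pseudometric from a dense sequence\<close>

locale dense_sequence_metric = Metric_space M d
  for M :: "'a set" and d +
  fixes p :: "nat \<Rightarrow> 'a"
  (* the premise M \<noteq> {} lets the empty space qualify *)
  assumes dense_sequence_in: "M \<noteq> {} \<Longrightarrow> p k \<in> M"
    and dense_sequence_approx: "x \<in> M \<Longrightarrow> 0 < \<epsilon> \<Longrightarrow> \<exists>k. d x (p k) < \<epsilon>"
begin

definition coord :: "nat \<Rightarrow> 'a \<Rightarrow> real" where
  "coord n x = min 1 (d x (p n))"

(* pdist N is the l1 distance of the first N coordinates of the embedding x \<mapsto> (coord n x)\<^sub>n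
   into the Hilbert cube. Unlike d it is totally bounded, which keeps the cone family countable. *)
definition pdist :: "nat \<Rightarrow> 'a \<Rightarrow> 'a \<Rightarrow> real" where
  "pdist N x y = (\<Sum>n<N. \<bar>coord n x - coord n y\<bar>)"

lemma coord_bounds:
  assumes "x \<in> M"
  shows "0 \<le> coord n x \<and> coord n x \<le> 1"
  using assms dense_sequence_in[of n] nonneg[of x "p n"] by (auto simp: coord_def)

lemma coord_lipschitz:
  assumes "x \<in> M" "y \<in> M"
  shows "\<bar>coord n x - coord n y\<bar> \<le> d x y"
proof -
  have "p n \<in> M"
    using assms dense_sequence_in by blast
  then have "\<bar>d x (p n) - d y (p n)\<bar> \<le> d x y"
    using triangle[OF assms(1,2) \<open>p n \<in> M\<close>] triangle[OF assms(2,1) \<open>p n \<in> M\<close>] commute[of x y]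
    unfolding abs_le_iff by linarith
  then show ?thesis
    unfolding coord_def by linarith
qed

lemma pdist_nonneg: "0 \<le> pdist N x y"
  by (simp add: pdist_def sum_nonneg)

lemma pdist_commute: "pdist N x y = pdist N y x"
  by (simp add: pdist_def abs_minus_commute)

lemma pdist_triangle: "pdist N x z \<le> pdist N x y + pdist N y z"
  unfolding pdist_def sum.distrib[symmetric] by (rule sum_mono) linarith

lemma pdist_mono: "N \<le> N' \<Longrightarrow> pdist N x y \<le> pdist N' x y"
  unfolding pdist_def by (rule sum_mono2) auto

lemma pdist_le_dist:
  assumes "x \<in> M" "y \<in> M"
  shows "pdist N x y \<le> N * d x y"
proof -
  have "pdist N x y \<le> (\<Sum>n<N. d x y)"
    unfolding pdist_def using coord_lipschitz[OF assms] by (rule sum_mono)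
  then show ?thesis
    by simp
qed

lemma continuous_map_pdist: "continuous_map mtopology euclideanreal (\<lambda>x. pdist N x y)"
proof -
  have "continuous_map mtopology euclideanreal (\<lambda>x. d x (p n))" for n
  proof -
    have "continuous_map mtopology mtopology (\<lambda>x. p n)"
      using dense_sequence_in[of n] by (auto simp flip: null_topspace_iff_trivial)
    then show ?thesis
      using continuous_map_mdist[of mtopology "metric (M, d)" "\<lambda>x. x" "\<lambda>x. p n"] by simp
  qed
  then show ?thesis
    unfolding pdist_def coord_def by (intro continuous_intros) auto
qed

lemma pdist_separates_closed:
  assumes x: "x \<in> M" and E: "closedin mtopology E" and "x \<notin> E"
  obtains N \<delta> where "0 < \<delta>" "\<And>y. y \<in> E \<Longrightarrow> \<delta> \<le> pdist N x y"
proof -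
  have "openin mtopology (M - E)"
    using E by (simp add: openin_diff)
  moreover have "x \<in> M - E"
    using x \<open>x \<notin> E\<close> by simp
  ultimately obtain r where "0 < r" "mball x r \<subseteq> M - E"
    unfolding openin_mtopology by auto
  moreover define \<rho> where "\<rho> = min r 1"
  ultimately have \<rho>: "0 < \<rho>" "\<rho> \<le> 1" "mball x \<rho> \<subseteq> M - E"
    using mball_subset_concentric[of \<rho> r x] by auto
  obtain k where k: "d x (p k) < \<rho> / 3"
    using dense_sequence_approx[OF x, of "\<rho> / 3"] \<rho> by auto
  have pk: "p k \<in> M"
    using x dense_sequence_in by blast
  show thesis
  proof
    show "0 < \<rho> / 3"
      using \<rho> by simp
    fix y assume "y \<in> E"
    then have "y \<in> M" "y \<notin> mball x \<rho>"
      using closedin_subset[OF E] \<rho>(3) by auto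
    then have y: "y \<in> M" "\<rho> \<le> d x y"
      using x by (auto simp: not_less)
    then have "2 * \<rho> / 3 \<le> d y (p k)"
      using triangle[OF x pk y(1)] k commute[of "p k" y] by linarith
    then have "\<rho> / 3 \<le> \<bar>coord k x - coord k y\<bar>"
      using k \<rho> nonneg[of x "p k"] unfolding coord_def by linarith
    also have "\<dots> \<le> pdist (Suc k) x y"
      unfolding pdist_def by (rule member_le_sum) auto
    finally show "\<rho> / 3 \<le> pdist (Suc k) x y" .
  qed
qed

lemma pdist_dense_sequence_approx:
  assumes "y \<in> M" "0 < \<epsilon>"
  shows "\<exists>k. pdist N y (p k) < \<epsilon>"
proof -
  obtain k where k: "d y (p k) < \<epsilon> / (N + 1)"
    using dense_sequence_approx[OF assms(1), of "\<epsilon> / (N + 1)"] assms(2) by auto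
  have "pdist N y (p k) \<le> N * d y (p k)"
    using assms(1) dense_sequence_in by (intro pdist_le_dist) auto
  also have "\<dots> \<le> N * (\<epsilon> / (N + 1))"
    using k by (intro mult_left_mono) auto
  also have "\<dots> < \<epsilon>"
    using assms(2) by (simp add: field_simps)
  finally show ?thesis ..
qed

lemma pdist_finite_net:
  assumes "0 < \<eta>"
  shows "\<exists>K. finite K \<and> (\<forall>x\<in>M. \<exists>k\<in>K. pdist N x (p k) < \<eta>)"
proof -
  obtain G :: nat where G: "2 * N / \<eta> < G"
    using reals_Archimedean2 by blast
  moreover have "0 \<le> 2 * N / \<eta>"
    using assms by simp
  ultimately have "0 < G"
    by simp
  obtain F where F: "finite F" "F \<subseteq> M" "\<And>x. x \<in> M \<Longrightarrow> \<exists>y\<in>F. \<forall>n<N. \<bar>coord n x - coord n y\<bar> < 1 / G"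
    using finite_grid_net[of M coord G N] coord_bounds \<open>0 < G\<close> by blast
  have "\<exists>k. pdist N y (p k) < \<eta> / 2" if "y \<in> F" for y
    using that F(2) assms by (intro pdist_dense_sequence_approx) auto
  then obtain \<kappa> where \<kappa>: "\<And>y. y \<in> F \<Longrightarrow> pdist N y (p (\<kappa> y)) < \<eta> / 2"
    by metis
  have "\<exists>k\<in>\<kappa> ` F. pdist N x (p k) < \<eta>" if x: "x \<in> M" for x
  proof -
    obtain y where "y \<in> F" and close: "\<And>n. n < N \<Longrightarrow> \<bar>coord n x - coord n y\<bar> < 1 / G"
      using F(3)[OF x] by blast
    have "pdist N x y \<le> (\<Sum>n<N. 1 / G)"
      unfolding pdist_def using close by (intro sum_mono) (simp add: less_imp_le)
    also have "\<dots> = N / G"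
      by simp
    also have "\<dots> < \<eta> / 2"
      using G assms \<open>0 < G\<close> by (simp add: field_simps)
    finally have "pdist N x y < \<eta> / 2" .
    then have "pdist N x (p (\<kappa> y)) < \<eta>"
      using pdist_triangle[of N x "p (\<kappa> y)" y] \<kappa>[OF \<open>y \<in> F\<close>] by linarith
    then show ?thesis
      using \<open>y \<in> F\<close> by blast
  qed
  then show ?thesis
    using F(1) by blast
qed

definition pdist_net :: "nat \<Rightarrow> real \<Rightarrow> nat set" where
  "pdist_net N \<eta> = (SOME K. finite K \<and> (\<forall>x\<in>M. \<exists>k\<in>K. pdist N x (p k) < \<eta>))"

lemma pdist_net:
  assumes "0 < \<eta>"
  shows "finite (pdist_net N \<eta>)" "x \<in> M \<Longrightarrow> \<exists>k\<in>pdist_net N \<eta>. pdist N x (p k) < \<eta>"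
  using someI_ex[OF pdist_finite_net[OF assms]] unfolding pdist_net_def by blast+

definition far_core :: "(nat \<Rightarrow> 'a set) \<Rightarrow> (nat \<Rightarrow> 'a set) \<Rightarrow> nat \<Rightarrow> 'a set" where
  "far_core P Q m = {x \<in> M. \<exists>n\<le>m. x \<in> P n \<and> (\<forall>y\<in>Q n. 1 / Suc m \<le> pdist m x y)}"

lemma eventually_in_far_core:
  assumes "x \<in> M" "x \<in> P n" "x \<notin> Q n" "closedin mtopology (Q n)"
  shows "\<forall>\<^sub>F m in sequentially. x \<in> far_core P Q m"
proof -
  obtain N \<delta> where \<delta>: "0 < \<delta>" "\<And>y. y \<in> Q n \<Longrightarrow> \<delta> \<le> pdist N x y"
    using pdist_separates_closed[OF assms(1,4,3)] by blast
  obtain m0 where m0: "inverse (Suc m0) < \<delta>"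
    using reals_Archimedean[OF \<delta>(1)] by blast
  have "x \<in> far_core P Q m" if "max n (max N m0) \<le> m" for m
  proof -
    have "1 / Suc m \<le> 1 / Suc m0"
      using that by (simp add: frac_le)
    then have "1 / Suc m \<le> pdist m x y" if "y \<in> Q n" for y
      using m0 \<delta>(2)[OF that] pdist_mono[of N m x y] \<open>max n (max N m0) \<le> m\<close>
      unfolding inverse_eq_divide by linarith
    then show ?thesis
      unfolding far_core_def using assms(1,2) that by auto
  qed
  then show ?thesis
    unfolding eventually_sequentially by blast
qed

definition cone_min :: "nat \<Rightarrow> nat \<Rightarrow> nat \<Rightarrow> (real \<times> nat) set \<Rightarrow> 'a \<Rightarrow> real" where
  "cone_min N L c W x = Min (insert (real c) ((\<lambda>(q, k). q + real L * pdist N x (p k)) ` W))"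

lemma continuous_map_cone_min:
  assumes "finite W"
  shows "continuous_map mtopology euclideanreal (cone_min N L c W)"
proof -
  let ?cone = "\<lambda>w x. case w of (q, k) \<Rightarrow> q + real L * pdist N x (p k)"
  have "continuous_map mtopology euclideanreal (?cone w)" for w
    by (cases w) (simp add: continuous_map_add continuous_map_real_mult_left continuous_map_pdist)
  then have "continuous_map mtopology euclideanreal (\<lambda>x. Min (insert (real c) ((\<lambda>w. ?cone w x) ` W)))"
    by (rule continuous_map_Min_insert[OF assms])
  then show ?thesis
    unfolding cone_min_def[abs_def] by simp
qed

end

section \<open>Approximation by minima of cones\<close>

lemma eventually_inverse_Suc_less:
  assumes "0 < e"
  shows "\<forall>\<^sub>F m in sequentially. 1 / real (Suc m) < e"
  using order_tendstoD(2)[OF LIMSEQ_inverse_real_of_nat assms] by (simp add: inverse_eq_divide)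

lemma eventually_le_real_of_nat: "\<forall>\<^sub>F m in sequentially. c \<le> real m"
  using filterlim_real_sequentially by (simp add: filterlim_at_top)

(* Monotonicity of G j and H j in the level r j is what separates upper and lower cores of
   comparable levels (cores_separated). *)
locale level_exhaustion = dense_sequence_metric M d p
  for M :: "'a set" and d and p +
  fixes r :: "nat \<Rightarrow> real" and f :: "'a \<Rightarrow> real" and G H :: "nat \<Rightarrow> nat \<Rightarrow> 'a set"
  assumes r_dense: "a < b \<Longrightarrow> \<exists>j. a < r j \<and> r j < b"
    and G_closed: "closedin mtopology (G j k)"
    and G_sub: "G j k \<subseteq> {x \<in> M. r j < f x}"
    and G_cover: "x \<in> M \<Longrightarrow> r j < f x \<Longrightarrow> \<exists>k. x \<in> G j k"
    and G_mono: "k \<le> k' \<Longrightarrow> r j' \<le> r j \<Longrightarrow> G j k \<subseteq> G j' k'"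
    and H_closed: "closedin mtopology (H j k)"
    and H_sub: "H j k \<subseteq> {x \<in> M. f x < r j}"
    and H_cover: "x \<in> M \<Longrightarrow> f x < r j \<Longrightarrow> \<exists>k. x \<in> H j k"
    and H_mono: "k \<le> k' \<Longrightarrow> r j \<le> r j' \<Longrightarrow> H j k \<subseteq> H j' k'"
begin

definition upper_core :: "nat \<Rightarrow> nat \<Rightarrow> 'a set" where
  "upper_core j = far_core (G j) (H j)"

definition lower_core :: "nat \<Rightarrow> nat \<Rightarrow> 'a set" where
  "lower_core j = far_core (H j) (G j)"

lemma cores_separated:
  assumes x: "x \<in> upper_core i m" and z: "z \<in> lower_core j m" and "r j \<le> r i"
  shows "1 / Suc m \<le> pdist m x z"
proof -
  obtain n where n: "n \<le> m" "x \<in> G i n" "\<And>y. y \<in> H i n \<Longrightarrow> 1 / Suc m \<le> pdist m x y"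
    using x unfolding upper_core_def far_core_def by blast
  obtain n' where n': "n' \<le> m" "z \<in> H j n'" "\<And>y. y \<in> G j n' \<Longrightarrow> 1 / Suc m \<le> pdist m z y"
    using z unfolding lower_core_def far_core_def by blast
  show ?thesis
  proof (cases "n' \<le> n")
    case True
    then have "z \<in> H i n"
      using H_mono[OF True \<open>r j \<le> r i\<close>] n'(2) by blast
    then show ?thesis
      by (rule n(3))
  next
    case False
    then have "x \<in> G j n'"
      using G_mono[of n n' j i] \<open>r j \<le> r i\<close> n(2) by auto
    then have "1 / Suc m \<le> pdist m z x"
      by (rule n'(3))
    then show ?thesis
      by (simp only: pdist_commute[of m z x])
  qed
qed

lemma eventually_in_upper_core:
  assumes "x \<in> M" "r j < f x"
  shows "\<forall>\<^sub>F m in sequentially. x \<in> upper_core j m"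
proof -
  obtain n where "x \<in> G j n"
    using G_cover[OF assms] by blast
  have "x \<notin> H j n"
    using H_sub[of j n] assms(2) by auto
  show ?thesis
    unfolding upper_core_def
    by (rule eventually_in_far_core[of x "G j" n "H j", OF assms(1) \<open>x \<in> G j n\<close> \<open>x \<notin> H j n\<close> H_closed])
qed

lemma eventually_in_lower_core:
  assumes "x \<in> M" "f x < r j"
  shows "\<forall>\<^sub>F m in sequentially. x \<in> lower_core j m"
proof -
  obtain n where "x \<in> H j n"
    using H_cover[OF assms] by blast
  have "x \<notin> G j n"
    using G_sub[of j n] assms(2) by auto
  show ?thesis
    unfolding lower_core_def
    by (rule eventually_in_far_core[of x "H j" n "G j", OF assms(1) \<open>x \<in> H j n\<close> \<open>x \<notin> G j n\<close> G_closed])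
qed

(* At x \<in> upper_core i m, a cone with r j < r i has its apex at
   distance at least 1 / (2 (m + 1)) from x, and the slope lifts it above r i; at a point of
   lower_core j m the nearby apex bounds approx m by r j + slope m * radius m \<le> r j + 1 / (m + 1). *)
definition slope :: "nat \<Rightarrow> nat" where
  "slope m = 4 * m * Suc m"

definition radius :: "nat \<Rightarrow> real" where
  "radius m = 1 / Suc m * (1 / (2 * Suc (slope m)))"

definition nodes :: "nat \<Rightarrow> (real \<times> nat) set" where
  "nodes m = {(r j, k) | j k. j < m \<and> \<bar>r j\<bar> \<le> m \<and> k \<in> pdist_net m (radius m) \<and>
                 (\<exists>z\<in>lower_core j m. pdist m (p k) z < radius m)}"

definition approx :: "nat \<Rightarrow> 'a \<Rightarrow> real" where
  "approx m = cone_min m (slope m) m (nodes m)"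

lemma radius_pos: "0 < radius m"
  by (simp add: radius_def)

lemma radius_le: "2 * radius m \<le> 1 / Suc m"
proof -
  have "2 * radius m = 1 / Suc m * (2 * (1 / (2 * Suc (slope m))))"
    unfolding radius_def by (simp only: mult.left_commute)
  also have "\<dots> \<le> 1 / Suc m"
    by (rule mult_left_le) simp_all
  finally show ?thesis .
qed

lemma slope_radius_le: "slope m * radius m \<le> 1 / Suc m"
proof -
  have "slope m * radius m = 1 / Suc m * (slope m * (1 / (2 * Suc (slope m))))"
    unfolding radius_def by (simp only: mult.left_commute)
  also have "\<dots> \<le> 1 / Suc m"
    by (rule mult_left_le) simp_all
  finally show ?thesis .
qed

lemma slope_inverse_Suc: "slope m * (1 / Suc m) = 4 * real m"
  unfolding slope_def by (simp add: field_simps)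

lemma finite_nodes: "finite (nodes m)"
proof -
  have "nodes m \<subseteq> (\<lambda>(j, k). (r j, k)) ` ({..<m} \<times> pdist_net m (radius m))"
    unfolding nodes_def by auto
  then show ?thesis
    by (rule finite_subset) (simp add: pdist_net(1)[OF radius_pos])
qed

lemma approx_lower:
  assumes x: "x \<in> upper_core i m" and "\<bar>r i\<bar> \<le> m"
  shows "r i \<le> approx m x"
proof -
  have "r i \<le> q + slope m * pdist m x (p k)" if node: "(q, k) \<in> nodes m" for q k
  proof -
    obtain j z where j: "q = r j" "\<bar>r j\<bar> \<le> m" and z: "z \<in> lower_core j m" "pdist m (p k) z < radius m"
      using node unfolding nodes_def by blast
    show ?thesis
    proof (cases "r i \<le> r j")
      case True
      moreover have "0 \<le> slope m * pdist m x (p k)"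
        by (simp add: pdist_nonneg)
      ultimately show ?thesis
        using j(1) by linarith
    next
      case False
      have "1 / Suc m \<le> pdist m x z"
        using cores_separated[OF x z(1)] False by simp
      moreover have "pdist m x z \<le> pdist m x (p k) + pdist m (p k) z"
        by (rule pdist_triangle)
      ultimately have "1 / Suc m \<le> 2 * pdist m x (p k)"
        using z(2) radius_le[of m] by linarith
      then have "slope m * (1 / Suc m) \<le> slope m * (2 * pdist m x (p k))"
        by (rule mult_left_mono) simp
      then have "4 * real m \<le> 2 * (slope m * pdist m x (p k))"
        by (simp only: slope_inverse_Suc mult.left_commute[of "real (slope m)" 2])
      then show ?thesis
        using j \<open>\<bar>r i\<bar> \<le> m\<close> by linarith
    qed
  qed
  moreover have "r i \<le> real m"
    using \<open>\<bar>r i\<bar> \<le> m\<close> by linarith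
  ultimately show ?thesis
    unfolding approx_def cone_min_def using finite_nodes by (auto simp: Min_ge_iff)
qed

lemma approx_upper:
  assumes x: "x \<in> lower_core j m" and "j < m" "\<bar>r j\<bar> \<le> m"
  shows "approx m x \<le> r j + 1 / Suc m"
proof -
  have "x \<in> M"
    using x unfolding lower_core_def far_core_def by blast
  then obtain k where k: "k \<in> pdist_net m (radius m)" "pdist m x (p k) < radius m"
    using pdist_net(2)[OF radius_pos] by blast
  have "(r j, k) \<in> nodes m"
    unfolding nodes_def using assms k pdist_commute[of m x "p k"]
    by (intro CollectI exI[of _ j] exI[of _ k]) auto
  then have "r j + slope m * pdist m x (p k) \<in> (\<lambda>(q, k). q + slope m * pdist m x (p k)) ` nodes m"
    by (rule rev_image_eqI) simp
  then have "approx m x \<le> r j + slope m * pdist m x (p k)"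
    unfolding approx_def cone_min_def using finite_nodes by (intro Min_le) auto
  also have "\<dots> \<le> r j + slope m * radius m"
    using k(2) by (intro add_left_mono mult_left_mono) auto
  also have "\<dots> \<le> r j + 1 / Suc m"
    using slope_radius_le[of m] by linarith
  finally show ?thesis .
qed

lemma approx_tendsto:
  assumes "x \<in> M"
  shows "(\<lambda>m. approx m x) \<longlonglongrightarrow> f x"
proof (rule order_tendstoI)
  fix a assume "a < f x"
  then obtain j where j: "a < r j" "r j < f x"
    using r_dense by blast
  from eventually_in_upper_core[OF assms j(2)] eventually_le_real_of_nat[of "\<bar>r j\<bar>"]
  show "\<forall>\<^sub>F m in sequentially. a < approx m x"
  proof eventually_elim
    case (elim m)
    then show ?case
      using approx_lower[of x j m] j(1) by linarith
  qed
next
  fix a assume "f x < a"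
  then obtain j where j: "f x < r j" "r j < a"
    using r_dense by blast
  have "\<forall>\<^sub>F m in sequentially. 1 / Suc m < a - r j"
    using j(2) by (intro eventually_inverse_Suc_less) simp
  with eventually_in_lower_core[OF assms j(1)] eventually_gt_at_top[of j]
    eventually_le_real_of_nat[of "\<bar>r j\<bar>"]
  show "\<forall>\<^sub>F m in sequentially. approx m x < a"
  proof eventually_elim
    case (elim m)
    then show ?case
      using approx_upper[of x j m] by linarith
  qed
qed

end

section \<open>A countable sequentially dense set of continuous functions\<close>

lemma rat_sequence_dense:
  fixes a b :: real
  assumes "a < b"
  shows "\<exists>j. a < from_nat_into \<rat> j \<and> from_nat_into \<rat> j < b"
proof -
  obtain q where "q \<in> \<rat>" "a < q" "q < b"
    using Rats_dense_in_real[OF assms] by blast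
  moreover obtain j where "from_nat_into \<rat> j = q"
    using from_nat_into_surj[OF countable_rat \<open>q \<in> \<rat>\<close>] by blast
  ultimately show ?thesis
    by blast
qed

lemma (in Metric_space) separable_imp_dense_sequence:
  assumes "separable_space mtopology"
  obtains p where "dense_sequence_metric M d p"
proof -
  obtain D where D: "countable D" "D \<subseteq> topspace mtopology" "mtopology closure_of D = topspace mtopology"
    using assms unfolding separable_space_def by metis
  define p where "p = from_nat_into D"
  have "dense_sequence_metric M d p"
  proof (intro dense_sequence_metric.intro Metric_space_axioms dense_sequence_metric_axioms.intro)
    fix k assume "M \<noteq> {}"
    then have "D \<noteq> {}"
      using D(3) closure_of_empty by fastforce
    then show "p k \<in> M"
      unfolding p_def using D(2) from_nat_into[OF \<open>D \<noteq> {}\<close>] by auto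
  next
    fix x and \<epsilon> :: real assume "x \<in> M" "0 < \<epsilon>"
    then have "x \<in> mtopology closure_of D"
      unfolding D(3) by simp
    then have "\<forall>r>0. \<exists>y\<in>D. y \<in> mball x r"
      unfolding metric_closure_of by simp
    then obtain y where "y \<in> D" "y \<in> mball x \<epsilon>"
      using \<open>0 < \<epsilon>\<close> by blast
    moreover obtain k where "p k = y"
      unfolding p_def using from_nat_into_surj[OF D(1) \<open>y \<in> D\<close>] by blast
    ultimately show "\<exists>k. d x (p k) < \<epsilon>"
      by auto
  qed
  then show thesis ..
qed

context dense_sequence_metric
begin

lemma cone_min_approximation:
  fixes r :: "nat \<Rightarrow> real" and f :: "'a \<Rightarrow> real"
  assumes r_dense: "\<And>a b. a < b \<Longrightarrow> \<exists>j. a < r j \<and> r j < b"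
    and upper: "\<And>j. fsigma_in mtopology {x \<in> M. r j < f x}"
    and lower: "\<And>j. fsigma_in mtopology {x \<in> M. f x < r j}"
  obtains \<sigma> where "\<And>m. \<exists>N L c W. finite W \<and> W \<subseteq> range r \<times> UNIV \<and> \<sigma> m = cone_min N L c W"
    and "\<And>x. x \<in> M \<Longrightarrow> (\<lambda>m. \<sigma> m x) \<longlonglongrightarrow> f x"
proof -
  have upper_anti: "{x \<in> M. r i < f x} \<subseteq> {x \<in> M. r j < f x}" if "r j \<le> r i" for i j
    using that by auto
  obtain G :: "nat \<Rightarrow> nat \<Rightarrow> 'a set"
    where G: "\<And>j k. closedin mtopology (G j k)" "\<And>j k. G j k \<subseteq> {x \<in> M. r j < f x}"
      "\<And>j x. x \<in> {x \<in> M. r j < f x} \<Longrightarrow> \<exists>k. x \<in> G j k"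
      "\<And>j j' k k'. k \<le> k' \<Longrightarrow> r j' \<le> r j \<Longrightarrow> G j k \<subseteq> G j' k'"
    using fsigma_in_monotone_exhaustion[of mtopology "\<lambda>j. {x \<in> M. r j < f x}" r, OF upper upper_anti]
    by blast
  have lower_anti: "{x \<in> M. f x < r i} \<subseteq> {x \<in> M. f x < r j}" if "- r j \<le> - r i" for i j
    using that by auto
  obtain H :: "nat \<Rightarrow> nat \<Rightarrow> 'a set"
    where H: "\<And>j k. closedin mtopology (H j k)" "\<And>j k. H j k \<subseteq> {x \<in> M. f x < r j}"
      "\<And>j x. x \<in> {x \<in> M. f x < r j} \<Longrightarrow> \<exists>k. x \<in> H j k"
      "\<And>j j' k k'. k \<le> k' \<Longrightarrow> - r j' \<le> - r j \<Longrightarrow> H j k \<subseteq> H j' k'"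
    using fsigma_in_monotone_exhaustion[of mtopology "\<lambda>j. {x \<in> M. f x < r j}" "\<lambda>j. - r j",
        OF lower lower_anti]
    by blast
  interpret level_exhaustion M d p r f G H
    using r_dense G H by unfold_locales auto
  show thesis
  proof
    fix m
    have "nodes m \<subseteq> range r \<times> UNIV"
      unfolding nodes_def by auto
    then show "\<exists>N L c W. finite W \<and> W \<subseteq> range r \<times> UNIV \<and> approx m = cone_min N L c W"
      unfolding approx_def using finite_nodes by blast
  qed (rule approx_tendsto)
qed

definition cone_family :: "('a \<Rightarrow> real) set" where
  "cone_family = (\<lambda>(N, L, c, W). restrict (cone_min N L c W) M) `
                   (UNIV \<times> UNIV \<times> UNIV \<times> {W. finite W \<and> W \<subseteq> \<rat> \<times> UNIV})"

lemma countable_cone_family: "countable cone_family"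
  unfolding cone_family_def
  by (intro countable_image countable_SIGMA countable_Collect_finite_subset) (auto simp: countable_rat)

lemma cone_family_subset_Cfun: "cone_family \<subseteq> Cfun mtopology"
proof
  fix g assume "g \<in> cone_family"
  then obtain N L c W where "finite W" and g: "g = restrict (cone_min N L c W) M"
    unfolding cone_family_def by auto
  have "continuous_map mtopology euclideanreal g"
    by (rule continuous_map_eq[OF continuous_map_cone_min[OF \<open>finite W\<close>]]) (simp add: g)
  then show "g \<in> Cfun mtopology"
    unfolding Cfun_def using g by auto
qed

lemma fsigma_measurable_subset_seq_closure_cone_family:
  "{f \<in> extensional M. fsigma_measurable mtopology f} \<subseteq> seq_closure (pointwise_top mtopology) cone_family"
proof
  fix f assume "f \<in> {f \<in> extensional M. fsigma_measurable mtopology f}"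
  then have "f \<in> extensional M"
    and upper: "fsigma_in mtopology {x \<in> M. r < f x}"
    and lower: "fsigma_in mtopology {x \<in> M. f x < r}" for r
    unfolding fsigma_measurable_def by auto
  obtain \<sigma>
    where \<sigma>: "\<And>m. \<exists>N L c W. finite W \<and> W \<subseteq> range (from_nat_into \<rat>) \<times> UNIV \<and>
                      \<sigma> m = cone_min N L c W"
      and lim: "\<And>x. x \<in> M \<Longrightarrow> (\<lambda>m. \<sigma> m x) \<longlonglongrightarrow> f x"
    using cone_min_approximation[of "from_nat_into \<rat>" f, OF rat_sequence_dense upper lower] by blast
  have "range (from_nat_into \<rat>) \<subseteq> (\<rat> :: real set)"
    using from_nat_into[of "\<rat> :: real set"] Rats_0 by blast
  have "restrict (\<sigma> m) M \<in> cone_family" for m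
  proof -
    obtain N L c W where "finite W" "W \<subseteq> range (from_nat_into \<rat>) \<times> UNIV" "\<sigma> m = cone_min N L c W"
      using \<sigma>[of m] by blast
    then show ?thesis
      unfolding cone_family_def using \<open>range (from_nat_into \<rat>) \<subseteq> \<rat>\<close>
      by (intro image_eqI[where x = "(N, L, c, W)"]) auto
  qed
  moreover have "limitin (pointwise_top mtopology) (\<lambda>m. restrict (\<sigma> m) M) f sequentially"
    using \<open>f \<in> extensional M\<close> lim by (simp add: limitin_pointwise_top)
  ultimately show "f \<in> seq_closure (pointwise_top mtopology) cone_family"
    unfolding seq_closure_def by (auto intro!: exI[of _ "\<lambda>m. restrict (\<sigma> m) M"])
qed

end

lemma countable_Cfun_sequentially_dense:
  assumes "separable_space X" "metrizable_space X"
  obtains S where "countable S" "S \<subseteq> Cfun X"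
    "{f \<in> extensional (topspace X). fsigma_measurable X f} \<subseteq> seq_closure (pointwise_top X) S"
proof -
  obtain M d where "Metric_space M d" and X: "X = Metric_space.mtopology M d"
    using assms(2) unfolding metrizable_space_def by blast
  interpret Metric_space M d
    by fact
  obtain p where "dense_sequence_metric M d p"
    using separable_imp_dense_sequence assms(1) X by blast
  interpret dense_sequence_metric M d p
    by fact
  show thesis
    using countable_cone_family cone_family_subset_Cfun fsigma_measurable_subset_seq_closure_cone_family
    by (intro that) (simp_all add: X)
qed

theorem corollary3p5:
  fixes X :: "'a topology"
  assumes "separable_space X" and "metrizable_space X"
  shows "sequentially_separable (USC_p X) \<and>
         sequentially_separable (B1_p X) \<and>
         (\<exists>S. countable S \<and> S \<subseteq> Cfun X \<and> seq_closure (pointwise_top X) S = B1 X)"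
proof -
  obtain S where S: "countable S" "S \<subseteq> Cfun X"
    and dense: "{f \<in> extensional (topspace X). fsigma_measurable X f} \<subseteq> seq_closure (pointwise_top X) S"
    using countable_Cfun_sequentially_dense[OF assms] by blast
  have USC: "USC X \<subseteq> seq_closure (pointwise_top X) S"
    using USC_subset_fsigma_measurable[OF assms(2)] dense by (rule subset_trans)
  have B1: "B1 X \<subseteq> seq_closure (pointwise_top X) S"
    using B1_subset_fsigma_measurable dense by (rule subset_trans)
  have "seq_closure (pointwise_top X) S = B1 X"
    using seq_closure_mono[OF S(2)] B1 unfolding B1_def by (rule equalityI)
  moreover have "sequentially_separable (USC_p X)"
    unfolding USC_p_def using S(1) subset_trans[OF S(2) Cfun_subset_USC] USC
    by (rule sequentially_separable_subtopology)
  moreover have "sequentially_separable (B1_p X)"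
    unfolding B1_p_def using S(1) subset_trans[OF S(2) Cfun_subset_B1] B1
    by (rule sequentially_separable_subtopology)
  ultimately show ?thesis
    using S by blast
qed

end
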